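(* Let $q$ be a prime power, $n\geq 3$, and let $I_n(q)$ be the bipartite graph whose vertices are the $1$-dimensional and the $(n-1)$-dimensional subspaces of an $n$-dimensional vector space over the field with $q$ elements, with a $1$-dimensional subspace adjacent to an $(n-1)$-dimensional subspace if and only if it is contained in it. Then $I_n(q)$ is (isomorphic to) a Cayley graph.
   Context: For a finite group $\Gamma$ and a subset $S\subseteq\Gamma$ that does not contain the identity, is closed under inverses, and generates $\Gamma$, the Cayley graph of $\Gamma$ with respect to $S$ has vertex set $\Gamma$ and an edge between $g$ and $h$ whenever $g^{-1}h\in S$. A graph is a Cayley graph if it is isomorphic to the Cayley graph of some such pair $(\Gamma,S)$. *)

theory Defs
  imports "HOL-Analysis.Analysis" "HOL-Algebra.Generated_Groups"
begin

text \<open>The group is taken with elements of the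
vertex type (no loss: any group isomorphic, as a graph, to V can be transported).\<close>

definition is_cayley_graph :: "'v set \<Rightarrow> ('v \<Rightarrow> 'v \<Rightarrow> bool) \<Rightarrow> bool" where
  "is_cayley_graph V E \<longleftrightarrow>
     (\<exists>(G :: 'v monoid) S f.
        group G \<and> finite (carrier G) \<and>
        S \<subseteq> carrier G \<and> \<one>\<^bsub>G\<^esub> \<notin> S \<and>
        (\<forall>s\<in>S. inv\<^bsub>G\<^esub> s \<in> S) \<and>
        generate G S = carrier G \<and>
        bij_betw f (carrier G) V \<and>
        (\<forall>g\<in>carrier G. \<forall>h\<in>carrier G.
            E (f g) (f h) \<longleftrightarrow> inv\<^bsub>G\<^esub> g \<otimes>\<^bsub>G\<^esub> h \<in> S))"

definition incidence_vertices :: "('a::field ^ 'n::finite) set set" where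
  "incidence_vertices =
     {U. vec.subspace U \<and> (vec.dim U = 1 \<or> vec.dim U = CARD('n) - 1)}"

definition incidence_adj :: "('a::field ^ 'n::finite) set \<Rightarrow> ('a ^ 'n) set \<Rightarrow> bool" where
  "incidence_adj U W \<longleftrightarrow>
     (vec.subspace U \<and> vec.subspace W) \<and>
     ((vec.dim U = 1 \<and> vec.dim W = CARD('n) - 1 \<and> U \<subseteq> W) \<or>
      (vec.dim W = 1 \<and> vec.dim U = CARD('n) - 1 \<and> W \<subseteq> U))"

end

theory Submission
  imports Defs "HOL-Algebra.Algebraic_Closure_Type" "HOL-Number_Theory.Residues"
begin

text \<open>Let \<open>F\<close> be the field with \<open>q\<close> elements and identify \<open>F\<^sup>n\<close>, as an \<open>F\<close>-vector space, with the
  field \<open>K\<close> of order \<open>q\<^sup>n\<close> (the roots of \<open>X ^ q ^ n - X\<close> in an algebraic closure of \<open>F\<close>). Fix a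
  nonzero \<open>F\<close>-linear form \<open>T\<close> on \<open>K\<close>. In the generalised dihedral group of \<open>K\<^sup>\<times>\<close> send the rotation
  \<open>a\<close> to the point \<open>F a\<inverse>\<close> and the reflection \<open>b\<close> to the hyperplane \<open>{v. T (b v) = 0}\<close>. Two
  elements have the same image iff they differ by a factor in the normal subgroup \<open>F\<^sup>\<times>\<close>, so
  the image is a group structure on the vertex set; the point of \<open>a\<close> lies on the hyperplane of \<open>b\<close>
  iff \<open>T (b / a) = 0\<close>. Hence the incidence graph is the Cayley graph with respect to the
  reflections \<open>b\<close> with \<open>T b = 0\<close>. For \<open>n \<ge> 3\<close> points and hyperplanes differ in dimension, and
  two hyperplanes \<open>{v. T v = 0}\<close> and \<open>{v. T (z v) = 0}\<close> meet nontrivially, which writes every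
  rotation \<open>z\<close> as a product of two such reflections, so the connection set generates.\<close>

section \<open>Coordinates over a finite subfield\<close>

definition coord_space :: "'b::zero set \<Rightarrow> nat \<Rightarrow> (nat \<Rightarrow> 'b) set" where
  "coord_space R k = {c. (\<forall>i<k. c i \<in> R) \<and> (\<forall>i\<ge>k. c i = 0)}"

definition lin_comb :: "(nat \<Rightarrow> 'b::comm_ring_1) \<Rightarrow> nat \<Rightarrow> (nat \<Rightarrow> 'b) \<Rightarrow> 'b" where
  "lin_comb b k c = (\<Sum>i<k. c i * b i)"

lemma bij_betw_coord_space_PiE:
  "bij_betw (\<lambda>c. restrict c {..<k}) (coord_space R k) ({..<k} \<rightarrow>\<^sub>E R)"
  by (rule bij_betw_byWitness[where f' = "\<lambda>f i. if i < k then f i else 0"])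
    (auto simp: coord_space_def fun_eq_iff PiE_def extensional_def)

lemma coord_space_0: "coord_space R 0 = {\<lambda>_. 0}"
  by (auto simp: coord_space_def)

lemma card_coord_space: "card (coord_space R k) = card R ^ k"
  using bij_betw_same_card[OF bij_betw_coord_space_PiE] by (simp add: card_PiE)

lemma lin_comb_Suc: "lin_comb b (Suc k) c = lin_comb b k c + c k * b k"
  by (simp add: lin_comb_def)

lemma lin_comb_update_coeff [simp]: "lin_comb b k (c(k := r)) = lin_comb b k c"
  by (simp add: lin_comb_def)

lemma lin_comb_update_vector [simp]: "lin_comb (b(k := y)) k c = lin_comb b k c"
  by (simp add: lin_comb_def)

locale finite_subfield =
  fixes R :: "'b::field set"
  assumes finite_R: "finite R"
    and zero_mem: "0 \<in> R" and one_mem: "1 \<in> R"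
    and diff_mem: "x \<in> R \<Longrightarrow> y \<in> R \<Longrightarrow> x - y \<in> R"
    and mult_mem: "x \<in> R \<Longrightarrow> y \<in> R \<Longrightarrow> x * y \<in> R"
    and inverse_mem: "x \<in> R \<Longrightarrow> inverse x \<in> R"
begin

lemma two_le_card: "2 \<le> card R"
proof -
  have "card {0::'b, 1} \<le> card R"
    using zero_mem one_mem finite_R by (intro card_mono) auto
  then show ?thesis by simp
qed

lemma inj_on_lin_comb_update:
  assumes inj: "inj_on (lin_comb b k) (coord_space R k)"
    and y: "y \<notin> lin_comb b k ` coord_space R k"
  shows "inj_on (lin_comb (b(k := y)) (Suc k)) (coord_space R (Suc k))"
proof (rule inj_onI)
  have lc: "lin_comb (b(k := y)) (Suc k) c = lin_comb b k c + c k * y" for c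
    by (simp add: lin_comb_Suc)
  fix c c' assume c: "c \<in> coord_space R (Suc k)" and c': "c' \<in> coord_space R (Suc k)"
    and eq: "lin_comb (b(k := y)) (Suc k) c = lin_comb (b(k := y)) (Suc k) c'"
  have truncate: "c(k := 0) \<in> coord_space R k" "c'(k := 0) \<in> coord_space R k"
    using c c' by (auto simp: coord_space_def)
  show "c = c'"
  proof (cases "c k = c' k")
    case True
    have "lin_comb b k (c(k := 0)) = lin_comb b k (c'(k := 0))"
      using eq True by (simp add: lc)
    then have "c(k := 0) = c'(k := 0)"
      by (rule inj_onD[OF inj _ truncate])
    then show ?thesis using True by (metis fun_upd_triv fun_upd_upd)
  next
    case False
    \<comment> \<open>otherwise \<open>y\<close> would be a combination of the first \<open>k\<close> vectors\<close>
    define d where "d = c k - c' k"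
    have d: "d \<noteq> 0" "inverse d \<in> R"
      using False c c' by (auto simp: d_def coord_space_def intro!: inverse_mem diff_mem)
    define e where "e i = (if i < k then (c' i - c i) * inverse d else 0)" for i
    have e: "e \<in> coord_space R k"
      using c c' d by (auto simp: coord_space_def e_def intro!: mult_mem diff_mem)
    have "d * y = lin_comb b k c' - lin_comb b k c"
      using eq by (simp add: lc d_def algebra_simps)
    also have "\<dots> = (\<Sum>i<k. (c' i - c i) * b i)"
      by (simp add: lin_comb_def sum_subtractf algebra_simps)
    finally have "y = (\<Sum>i<k. (c' i - c i) * b i) * inverse d"
      using d by (simp add: field_simps)
    also have "\<dots> = lin_comb b k e"
      unfolding lin_comb_def sum_distrib_right by (rule sum.cong) (auto simp: e_def mult_ac)
    finally have "y = lin_comb b k e" .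
    then show ?thesis using e y by blast
  qed
qed

end

locale finite_subspace = finite_subfield R for R :: "'b::field set" +
  fixes V :: "'b set"
  assumes finite_V: "finite V"
    and zero_mem_V: "0 \<in> V"
    and add_mem_V: "x \<in> V \<Longrightarrow> y \<in> V \<Longrightarrow> x + y \<in> V"
    and scale_mem_V: "r \<in> R \<Longrightarrow> x \<in> V \<Longrightarrow> r * x \<in> V"
begin

lemma lin_comb_mem: "(\<And>i. i < k \<Longrightarrow> b i \<in> V) \<Longrightarrow> c \<in> coord_space R k \<Longrightarrow> lin_comb b k c \<in> V"
proof (induction k arbitrary: c)
  case 0 then show ?case by (simp add: lin_comb_def zero_mem_V)
next
  case (Suc k)
  have "lin_comb b k (c(k := 0)) \<in> V"
    by (rule Suc.IH) (use Suc.prems in \<open>auto simp: coord_space_def\<close>)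
  moreover have "c k * b k \<in> V"
    using Suc.prems by (auto simp: coord_space_def intro: scale_mem_V)
  ultimately show ?case
    by (simp add: lin_comb_Suc add_mem_V)
qed

theorem ex_bij_betw_lin_comb: "\<exists>k b. bij_betw (lin_comb b k) (coord_space R k) V"
proof -
  define independent where
    "independent k b \<longleftrightarrow> (\<forall>i<k. b i \<in> V) \<and> inj_on (lin_comb b k) (coord_space R k)" for k b
  have bounded: "k \<le> card V" if "independent k b" for k b
  proof -
    have "k < 2 ^ k" by simp
    also have "\<dots> \<le> card R ^ k" using two_le_card by (simp add: power_mono)
    also have "\<dots> = card (lin_comb b k ` coord_space R k)"
      using that by (simp add: independent_def card_image card_coord_space)
    also have "\<dots> \<le> card V"
      using that lin_comb_mem finite_V by (intro card_mono) (auto simp: independent_def)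
    finally show ?thesis by simp
  qed
  define ks where "ks = {k. \<exists>b. independent k b}"
  have "ks \<subseteq> {..card V}"
    unfolding ks_def atMost_def using bounded by blast
  then have "finite ks"
    by (rule finite_subset) simp
  have "independent 0 b" for b
    by (simp add: independent_def coord_space_0)
  then have "ks \<noteq> {}"
    unfolding ks_def by blast
  define k where "k = Max ks"
  have "k \<in> ks"
    unfolding k_def using \<open>finite ks\<close> \<open>ks \<noteq> {}\<close> by (rule Max_in)
  then obtain b where b: "independent k b" by (auto simp: ks_def)
  have max: "k' \<le> k" if "independent k' b'" for k' b'
    unfolding k_def using \<open>finite ks\<close> that by (intro Max_ge) (auto simp: ks_def)
  have "lin_comb b k ` coord_space R k = V"
  proof (rule ccontr)
    assume "lin_comb b k ` coord_space R k \<noteq> V"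
    then obtain y where "y \<in> V" "y \<notin> lin_comb b k ` coord_space R k"
      using b lin_comb_mem by (auto simp: independent_def)
    then have "independent (Suc k) (b(k := y))"
      using b inj_on_lin_comb_update by (auto simp: independent_def less_Suc_eq)
    then show False using max by force
  qed
  then show ?thesis using b by (auto simp: independent_def bij_betw_def)
qed

corollary ex_card_eq_power: "\<exists>k. card V = card R ^ k"
  using ex_bij_betw_lin_comb bij_betw_same_card card_coord_space by metis

end

section \<open>Finite fields\<close>

lemma power_card_eq_self:
  fixes x :: "'a::{finite,field}"
  shows "x ^ CARD('a) = x"
proof (cases "x = 0")
  case False
  \<comment> \<open>multiplication by \<open>x\<close> permutes the nonzero elements\<close>
  have "(\<Prod>y\<in>UNIV-{0}. x * y) = (\<Prod>y\<in>UNIV-{0}. y)"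
    by (rule prod.reindex_bij_witness[of _ "\<lambda>y. y / x" "\<lambda>y. x * y"]) (use False in auto)
  moreover have "(\<Prod>y\<in>UNIV-{0}. x * y) = x ^ (CARD('a) - 1) * (\<Prod>y\<in>UNIV-{0}. y)"
    by (simp add: prod.distrib)
  ultimately have "x ^ (CARD('a) - 1) = 1"
    by simp
  moreover have "x ^ CARD('a) = x * x ^ (CARD('a) - 1)"
    using finite_UNIV_card_ge_0[where 'a = 'a] by (simp flip: power_Suc)
  ultimately show ?thesis
    by simp
qed (simp add: finite_UNIV_card_ge_0)

lemma two_le_card_field: "2 \<le> CARD('a::{finite,field})"
proof -
  have "card {0::'a, 1} \<le> CARD('a)" by (intro card_mono) auto
  then show ?thesis by simp
qed

lemma inverse_eq_power_card:
  fixes x :: "'a::{finite,field}"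
  assumes "x \<noteq> 0"
  shows "inverse x = x ^ (CARD('a) - 2)"
proof (rule inverse_unique)
  have "x * x ^ (CARD('a) - 2) * x = x ^ (CARD('a) - 2 + 2)"
    by (simp add: power_add power2_eq_square mult_ac)
  also have "CARD('a) - 2 + 2 = CARD('a)"
    using two_le_card_field[where 'a = 'a] by simp
  finally have "x * x ^ (CARD('a) - 2) * x = x ^ CARD('a)" .
  then show "x * x ^ (CARD('a) - 2) = 1"
    using assms by (simp add: power_card_eq_self)
qed

theorem card_field_eq_CHAR_power: "\<exists>m. CARD('a::{finite,field}) = CHAR('a) ^ m"
proof -
  let ?p = "CHAR('a)"
  let ?R = "range (of_int :: int \<Rightarrow> 'a)"
  interpret finite_subspace ?R "UNIV :: 'a set"
  proof unfold_locales
    show "inverse x \<in> ?R" if "x \<in> ?R" for x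
      using that by (cases "x = 0") (auto simp: inverse_eq_power_card simp flip: of_int_power)
  qed (auto simp flip: of_int_diff of_int_mult intro: range_eqI[of _ _ 0] range_eqI[of _ _ 1])
  have "?R = of_int ` {0..<int ?p}"
  proof (intro equalityI subsetI)
    fix x assume "x \<in> ?R"
    then obtain i where "x = of_int i" by blast
    then have "x = of_int (i mod int ?p)"
      by (simp add: of_int_eq_iff_cong_CHAR cong_def)
    then show "x \<in> of_int ` {0..<int ?p}"
      using finite_imp_CHAR_pos[where 'a = 'a] by auto
  qed auto
  moreover have "inj_on (of_int :: int \<Rightarrow> 'a) {0..<int ?p}"
    by (rule inj_onI) (auto simp: of_int_eq_iff_cong_CHAR cong_def)
  ultimately have "card ?R = ?p" by (simp add: card_image)
  then show ?thesis using ex_card_eq_power by simp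
qed

lemma of_nat_card_eq_0: "of_nat CARD('a::{finite,field}) = (0 :: 'a alg_closure)"
proof -
  have "of_nat CARD('a) = (0 :: 'a)"
    by (simp add: of_nat_eq_0_iff_char_dvd CHAR_dvd_CARD)
  then show ?thesis by (metis to_ac_of_nat to_ac_0)
qed

lemma card_set_mset_eq_size_if_separable:
  fixes A :: "'a::idom multiset"
  assumes "\<And>x. poly (pderiv (\<Prod>x\<in>#A. [:-x, 1:])) x \<noteq> 0"
  shows "card (set_mset A) = size A"
proof -
  have simple: "count A x \<le> 1" for x
  proof (rule ccontr)
    assume "\<not> count A x \<le> 1"
    then have "x \<in># A" by (simp add: count_inI)
    then obtain A' where A': "A = add_mset x A'" by (metis multi_member_split)
    then have "x \<in># A'" using \<open>\<not> count A x \<le> 1\<close> by (simp add: count_inI)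
    then obtain B where "A' = add_mset x B" by (metis multi_member_split)
    then have "(\<Prod>x\<in>#A. [:-x, 1:]) = [:-x, 1:] * ([:-x, 1:] * (\<Prod>y\<in>#B. [:-y, 1:]))"
      by (simp only: A' prod_mset.add_mset image_mset_add_mset)
    then have "poly (pderiv (\<Prod>x\<in>#A. [:-x, 1:])) x = 0"
      by (simp only: pderiv_mult poly_add poly_mult) simp
    then show False using assms by blast
  qed
  have "mset_set (set_mset A) = A"
  proof (rule multiset_eqI)
    show "count (mset_set (set_mset A)) x = count A x" for x
      using simple[of x] by (auto simp: count_mset_set' simp flip: count_greater_zero_iff)
  qed
  then show ?thesis by (metis size_mset_set)
qed

definition galois_field :: "nat \<Rightarrow> 'a::field alg_closure set" where
  "galois_field Q = {x. x ^ Q = x}"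

context
  fixes Q k :: nat
  assumes Q: "Q = CARD('a::{finite,field}) ^ k" and k: "0 < k"
begin

lemma add_power_card_power: "(x + y) ^ Q = x ^ Q + (y :: 'a alg_closure) ^ Q"
proof -
  obtain m where "CARD('a) = CHAR('a) ^ m" using card_field_eq_CHAR_power by blast
  then have "Q = CHAR('a alg_closure) ^ (m * k)" using Q by (simp add: power_mult)
  moreover have "Factorial_Ring.prime CHAR('a alg_closure)"
    by (simp add: prime_CHAR_semidom finite_imp_CHAR_pos)
  ultimately show ?thesis by (intro freshmans_dream') auto
qed

lemma two_le_card_power: "2 \<le> Q"
proof -
  have "CARD('a) ^ 1 \<le> CARD('a) ^ k"
    using k two_le_card_field[where 'a = 'a] by (intro power_increasing) auto
  then show ?thesis using Q two_le_card_field[where 'a = 'a] by simp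
qed

lemma galois_field_closed:
  fixes x y :: "'a alg_closure"
  shows zero_mem_galois_field: "0 \<in> (galois_field Q :: 'a alg_closure set)"
    and one_mem_galois_field: "1 \<in> (galois_field Q :: 'a alg_closure set)"
    and add_mem_galois_field:
      "x \<in> galois_field Q \<Longrightarrow> y \<in> galois_field Q \<Longrightarrow> x + y \<in> galois_field Q"
    and mult_mem_galois_field:
      "x \<in> galois_field Q \<Longrightarrow> y \<in> galois_field Q \<Longrightarrow> x * y \<in> galois_field Q"
    and inverse_mem_galois_field: "x \<in> galois_field Q \<Longrightarrow> inverse x \<in> galois_field Q"
  using two_le_card_power
  by (auto simp: galois_field_def add_power_card_power power_mult_distrib power_inverse)

lemma to_ac_mem_galois_field: "to_ac (a :: 'a) \<in> galois_field Q"
proof -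
  have "a ^ Q = a" unfolding Q
    by (induction k) (simp_all add: power_mult power_card_eq_self)
  then show ?thesis by (simp add: galois_field_def flip: to_ac_power)
qed

lemma card_galois_field:
  "finite (galois_field Q :: 'a alg_closure set) \<and> card (galois_field Q :: 'a alg_closure set) = Q"
proof -
  define P :: "'a alg_closure poly" where "P = Polynomial.monom 1 Q + [:0, -1:]"
  have poly_P: "poly P x = x ^ Q - x" for x by (simp add: P_def poly_monom)
  have deg: "Polynomial.degree P = Q"
    using two_le_card_power unfolding P_def by (subst degree_add_eq_left) (auto simp: degree_monom_eq)
  then have "Polynomial.lead_coeff P = 1"
    using two_le_card_power by (simp add: P_def coeff_eq_0)
  then obtain A where "size A = Q" and factor: "P = (\<Prod>x\<in>#A. [:-x, 1:])"
    using alg_closed_imp_factorization[of P] deg two_le_card_power by fastforce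
  have roots: "galois_field Q = set_mset A"
  proof -
    have "poly P x = 0 \<longleftrightarrow> x \<in># A" for x
      by (subst factor) (auto simp: poly_prod_mset image_iff)
    then show ?thesis by (auto simp: galois_field_def poly_P)
  qed
  \<comment> \<open>\<open>P' = -1\<close> because \<open>Q = 0\<close> in the field, so no root of \<open>P\<close> is repeated\<close>
  have pderiv_P: "pderiv P = -1"
  proof -
    have "pderiv P = Polynomial.monom (of_nat Q) (Q - 1) - 1"
      by (simp add: P_def pderiv_add pderiv_monom pderiv_pCons)
        (metis minus_pCons one_pCons add.inverse_neutral)
    moreover have "(of_nat Q :: 'a alg_closure) = 0"
      using Q k of_nat_card_eq_0[where 'a = 'a] by (simp add: of_nat_power zero_power)
    ultimately show ?thesis by simp
  qed
  have "card (set_mset A) = size A"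
    using pderiv_P by (intro card_set_mset_eq_size_if_separable) (simp flip: factor)
  then show ?thesis using roots \<open>size A = Q\<close> by simp
qed

end

lemma finite_subspace_galois_field:
  assumes "0 < n"
  shows "finite_subspace (range to_ac) (galois_field (CARD('a::{finite,field}) ^ n) :: 'a alg_closure set)"
  using galois_field_closed[where 'a = 'a, OF refl assms] to_ac_mem_galois_field[where 'a = 'a, OF refl assms]
    card_galois_field[where 'a = 'a, OF refl assms]
  by unfold_locales (auto simp flip: to_ac_diff to_ac_mult to_ac_inverse)

lemma inj_padded_coordinates:
  assumes "inj f" and e: "bij_betw e {..<CARD('n)} (UNIV :: 'n::finite set)"
  shows "inj (\<lambda>v :: 'a ^ 'n. \<lambda>i. if i < CARD('n) then f (v $ e i) else 0)"
proof (rule injI)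
  fix v w :: "'a ^ 'n"
  assume eq: "(\<lambda>i. if i < CARD('n) then f (v $ e i) else 0) = (\<lambda>i. if i < CARD('n) then f (w $ e i) else 0)"
  show "v = w" unfolding vec_eq_iff
  proof
    fix j
    have "j \<in> e ` {..<CARD('n)}" using e by (simp add: bij_betw_def)
    then obtain i where "i < CARD('n)" "j = e i" by blast
    then show "v $ j = w $ j" using fun_cong[OF eq, of i] \<open>inj f\<close> by (simp add: inj_eq)
  qed
qed

theorem ex_linear_bij_galois_field:
  "\<exists>\<phi> :: 'a::{finite,field} ^ 'n::finite \<Rightarrow> 'a alg_closure.
     bij_betw \<phi> UNIV (galois_field (CARD('a) ^ CARD('n))) \<and>
     (\<forall>v w. \<phi> (v + w) = \<phi> v + \<phi> w) \<and> (\<forall>c v. \<phi> (c *s v) = to_ac c * \<phi> v)"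
proof -
  define n where "n = CARD('n)"
  define K where "K = (galois_field (CARD('a) ^ n) :: 'a alg_closure set)"
  have n: "0 < n" by (simp add: n_def)
  have card_K: "finite K" "card K = CARD('a) ^ n"
    using card_galois_field[where 'a = 'a, OF refl n] by (simp_all add: K_def)
  interpret finite_subspace "range to_ac" K
    unfolding K_def using n by (rule finite_subspace_galois_field)
  obtain k b where b: "bij_betw (lin_comb b k) (coord_space (range to_ac) k) K"
    using ex_bij_betw_lin_comb by blast
  have "CARD('a) ^ k = CARD('a) ^ n"
    using bij_betw_same_card[OF b] card_K by (simp add: card_coord_space card_image inj_to_ac)
  then have "k = n" using two_le_card_field[where 'a = 'a] by (simp add: power_inject_exp)
  obtain e where e: "bij_betw e {..<n} (UNIV :: 'n set)"
    using ex_bij_betw_nat_finite[of "UNIV :: 'n set"] by (auto simp: n_def atLeast0LessThan)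
  define coords where "coords v = (\<lambda>i. if i < n then to_ac (v $ e i) else 0)" for v :: "'a ^ 'n"
  define \<phi> where "\<phi> v = lin_comb b n (coords v)" for v
  have coords: "coords v \<in> coord_space (range to_ac) n" for v
    by (auto simp: coords_def coord_space_def)
  have "inj coords"
    unfolding coords_def[abs_def] n_def by (rule inj_padded_coordinates[OF inj_to_ac e[unfolded n_def]])
  then have "inj \<phi>"
    using b coords \<open>k = n\<close> unfolding \<phi>_def bij_betw_def inj_on_def by blast
  moreover have "range \<phi> \<subseteq> K"
    using b coords \<open>k = n\<close> unfolding \<phi>_def bij_betw_def by blast
  moreover have "card (range \<phi>) = card K"
    using \<open>inj \<phi>\<close> card_K by (simp add: n_def card_image)
  ultimately have "bij_betw \<phi> UNIV K"
    using card_subset_eq[of K "range \<phi>"] card_K by (simp add: bij_betw_def)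
  moreover have "\<phi> (v + w) = \<phi> v + \<phi> w" for v w
    by (simp add: \<phi>_def lin_comb_def coords_def distrib_right sum.distrib)
  moreover have "\<phi> (c *s v) = to_ac c * \<phi> v" for c v
    by (simp add: \<phi>_def lin_comb_def coords_def sum_distrib_left mult.assoc)
  ultimately show ?thesis by (auto simp: K_def n_def)
qed

section \<open>Linear forms on \<open>F\<^sup>n\<close>\<close>

definition dotp :: "'a::field ^ 'n::finite \<Rightarrow> 'a ^ 'n \<Rightarrow> 'a" where
  "dotp w v = (\<Sum>i\<in>UNIV. v $ i * w $ i)"

definition perp :: "'a::field ^ 'n::finite \<Rightarrow> ('a ^ 'n) set" where
  "perp w = {v. dotp w v = 0}"

definition line :: "'a::field ^ 'n::finite \<Rightarrow> ('a ^ 'n) set" where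
  "line v = range (\<lambda>c. c *s v)"

lemma dotp_add: "dotp w (v + u) = dotp w v + dotp w u"
  by (simp add: dotp_def distrib_right sum.distrib)

lemma dotp_scale: "dotp w (c *s v) = c * dotp w v"
  by (simp add: dotp_def sum_distrib_left mult.assoc)

lemma dotp_scale_left: "dotp (c *s w) v = c * dotp w v"
  by (simp add: dotp_def sum_distrib_left mult_ac)

lemma dotp_diff: "dotp w (v - u) = dotp w v - dotp w u"
  by (simp add: dotp_def left_diff_distrib sum_subtractf)

lemma dotp_zero [simp]: "dotp w 0 = 0" "dotp 0 v = 0"
  by (simp_all add: dotp_def)

lemma dotp_axis: "dotp w (axis j c) = c * w $ j"
proof -
  have "dotp w (axis j c) = (\<Sum>i\<in>{j}. axis j c $ i * w $ i)"
    unfolding dotp_def by (rule sum.mono_neutral_right) (auto simp: axis_def)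
  then show ?thesis by simp
qed

lemma additive_scale_eq_dotp:
  fixes f :: "'a::field ^ 'n::finite \<Rightarrow> 'a"
  assumes add: "\<And>v u. f (v + u) = f v + f u" and scale: "\<And>c v. f (c *s v) = c * f v"
  shows "f v = dotp (\<chi> i. f (axis i 1)) v"
proof -
  have f0: "f 0 = 0" using scale[of 0 0] by simp
  have sum: "f (\<Sum>i\<in>S. g i) = (\<Sum>i\<in>S. f (g i))" if "finite S" for S and g :: "'n \<Rightarrow> 'a ^ 'n"
    using that by (induction S rule: finite_induct) (simp_all add: add f0)
  have "f v = f (\<Sum>i\<in>UNIV. v $ i *s axis i 1)" by (simp add: basis_expansion)
  also have "\<dots> = (\<Sum>i\<in>UNIV. v $ i * f (axis i 1))" by (simp add: sum scale)
  finally show ?thesis by (simp add: dotp_def)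
qed

lemma dim_eq_card_iff_span_eq_UNIV:
  "vec.dim (S :: ('a::field ^ 'n::finite) set) = CARD('n) \<longleftrightarrow> vec.span S = UNIV"
  using vec.dim_eq_full[of S] by (simp add: vec.dimension_def card_cart_basis)

lemma subspace_perp: "vec.subspace (perp w)"
  unfolding vec.subspace_def perp_def by (simp add: dotp_add dotp_scale)

lemma subspace_line: "vec.subspace (line v)"
  using vec.subspace_span[of "{v}"] by (simp add: line_def vec.span_singleton)

lemma ex_dotp_eq_1:
  assumes "w \<noteq> (0 :: 'a::field ^ 'n::finite)"
  obtains v where "dotp w v = 1"
proof -
  obtain j where "w $ j \<noteq> 0" using assms by (metis vec_eq_iff zero_index)
  then have "dotp w (axis j (inverse (w $ j))) = 1" by (simp add: dotp_axis)
  then show ?thesis using that by blast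
qed

lemma dim_perp:
  assumes "w \<noteq> (0 :: 'a::field ^ 'n::finite)"
  shows "vec.dim (perp w) = CARD('n) - 1"
proof -
  obtain v0 where v0: "dotp w v0 = 1" using ex_dotp_eq_1[OF assms] .
  have span: "vec.span (perp w) = perp w" using subspace_perp by (simp add: vec.span_eq_iff)
  have "v - dotp w v *s v0 \<in> perp w" for v by (simp add: perp_def dotp_diff dotp_scale v0)
  then have "vec.span (insert v0 (perp w)) = UNIV" by (auto simp: vec.span_insert span)
  then have "vec.dim (insert v0 (perp w)) = CARD('n)" by (simp add: dim_eq_card_iff_span_eq_UNIV)
  moreover have "v0 \<notin> vec.span (perp w)" unfolding span using v0 by (simp add: perp_def)
  ultimately show ?thesis by (simp add: vec.dim_insert)
qed

lemma dim_line: "v \<noteq> 0 \<Longrightarrow> vec.dim (line (v :: 'a::field ^ 'n::finite)) = 1"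
  by (simp add: line_def vec.dim_insert flip: vec.span_singleton)

lemma dim_1_imp_line:
  assumes "vec.subspace U" "vec.dim (U :: ('a::field ^ 'n::finite) set) = 1"
  obtains v where "v \<noteq> 0" "U = line v"
proof -
  obtain B where B: "B \<subseteq> U" "vec.independent B" "U \<subseteq> vec.span B" "card B = 1"
    using vec.basis_exists[of U] assms by metis
  then obtain v where v: "B = {v}" by (auto simp: card_Suc_eq)
  have "v \<noteq> 0" using B(2) v vec.dependent_zero by blast
  moreover have "U = vec.span {v}" using B v assms(1) vec.span_subspace by blast
  ultimately show ?thesis using that by (simp add: line_def vec.span_singleton)
qed

lemma dim_hyperplane_imp_perp:
  assumes H: "vec.subspace H" "vec.dim (H :: ('a::field ^ 'n::finite) set) = CARD('n) - 1"
  obtains w where "w \<noteq> 0" "H = perp w"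
proof -
  have span: "vec.span H = H" using H by (simp add: vec.span_eq_iff)
  have "0 < CARD('n)" by simp
  then have "vec.dim H \<noteq> CARD('n)" using H(2) by linarith
  then obtain e where e: "e \<notin> H" using span dim_eq_card_iff_span_eq_UNIV[of H] by auto
  have "vec.dim (insert e H) = CARD('n)" using e H unfolding vec.dim_insert span by simp
  then have "vec.span (insert e H) = UNIV" by (simp add: dim_eq_card_iff_span_eq_UNIV)
  then have ex: "\<exists>c. v - c *s e \<in> H" for v by (auto simp: vec.span_insert span)
  \<comment> \<open>the coefficient of \<open>e\<close> in \<open>v = c e + h\<close> (\<open>h \<in> H\<close>) is a linear form with kernel \<open>H\<close>\<close>
  have unique: "c = c'" if "v - c *s e \<in> H" "v - c' *s e \<in> H" for v c c'
  proof (rule ccontr)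
    assume "c \<noteq> c'"
    have "(v - c' *s e) - (v - c *s e) \<in> H" using that H(1) vec.subspace_diff by blast
    moreover have "(v - c' *s e) - (v - c *s e) = (c - c') *s e" by (simp add: vec_eq_iff algebra_simps)
    ultimately have "inverse (c - c') *s ((c - c') *s e) \<in> H"
      using H(1) vec.subspace_scale by metis
    moreover have "inverse (c - c') * (c - c') = 1" using \<open>c \<noteq> c'\<close> by simp
    ultimately show False using e by (simp only: vector_smult_assoc vector_smult_lid)
  qed
  define g where "g v = (THE c. v - c *s e \<in> H)" for v
  have g: "v - c *s e \<in> H \<longleftrightarrow> g v = c" for v c
    using theI'[of "\<lambda>c. v - c *s e \<in> H"] ex unique unfolding g_def by blast
  have "g (v + u) = g v + g u" for v u
  proof -
    have "(v - g v *s e) + (u - g u *s e) \<in> H" using g H(1) vec.subspace_add by blast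
    moreover have "(v - g v *s e) + (u - g u *s e) = v + u - (g v + g u) *s e"
      by (simp add: vec_eq_iff algebra_simps)
    ultimately have "v + u - (g v + g u) *s e \<in> H" by simp
    then show ?thesis unfolding g .
  qed
  moreover have "g (a *s v) = a * g v" for a v
  proof -
    have "a *s (v - g v *s e) \<in> H" using g H(1) vec.subspace_scale by blast
    moreover have "a *s (v - g v *s e) = a *s v - (a * g v) *s e"
      by (simp add: vec_eq_iff algebra_simps)
    ultimately have "a *s v - (a * g v) *s e \<in> H" by simp
    then show ?thesis unfolding g .
  qed
  ultimately have g_dotp: "g v = dotp (\<chi> i. g (axis i 1)) v" for v
    by (rule additive_scale_eq_dotp)
  have "g e = 1" using g[of e 1] vec.subspace_0[OF H(1)] by simp
  then have "(\<chi> i. g (axis i 1)) \<noteq> 0" using g_dotp[of e] by auto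
  moreover have "H = perp (\<chi> i. g (axis i 1))"
    using g[of _ 0] by (auto simp: perp_def simp flip: g_dotp)
  ultimately show ?thesis using that by blast
qed

lemma perp_subset_imp_scale:
  assumes "w \<noteq> (0 :: 'a::field ^ 'n::finite)" "perp w \<subseteq> perp w'"
  obtains c where "w' = c *s w"
proof -
  obtain v0 where v0: "dotp w v0 = 1" using ex_dotp_eq_1[OF assms(1)] .
  define c where "c = dotp w' v0"
  have factor: "dotp w' v = c * dotp w v" for v
  proof -
    have "v - dotp w v *s v0 \<in> perp w" by (simp add: perp_def dotp_diff dotp_scale v0)
    then have "dotp w' (v - dotp w v *s v0) = 0" using assms(2) unfolding perp_def by blast
    then show ?thesis by (simp add: dotp_diff dotp_scale c_def mult.commute)
  qed
  then have "w' $ j = c * w $ j" for j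
    using factor[of "axis j 1"] by (simp add: dotp_axis)
  then have "w' = c *s w" by (simp add: vec_eq_iff)
  then show ?thesis by (rule that)
qed

lemma perp_scale: "c \<noteq> 0 \<Longrightarrow> perp (c *s w) = perp w"
  by (auto simp: perp_def dotp_scale_left)

lemma mem_line: "v \<in> line v"
  unfolding line_def by (metis rangeI vector_smult_lid)

lemma line_scale:
  assumes "c \<noteq> 0"
  shows "line (c *s v) = line v"
proof
  show "line (c *s v) \<subseteq> line v" by (auto simp: line_def vector_smult_assoc)
  have "v = inverse c *s (c *s v)" using assms by (simp add: vector_smult_assoc)
  then show "line v \<subseteq> line (c *s v)"
    unfolding line_def by (metis image_subsetI rangeI vector_smult_assoc)
qed

lemma line_eq_imp_scale:
  assumes "v' \<noteq> 0" "line v = line v'"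
  obtains c where "c \<noteq> 0" "v' = c *s v"
proof -
  have "v' \<in> line v" using assms(2) mem_line[of v'] by simp
  then obtain c where "v' = c *s v" unfolding line_def by blast
  moreover have "c \<noteq> 0" using assms(1) calculation by auto
  ultimately show ?thesis using that by blast
qed

lemma line_subset_iff: "vec.subspace U \<Longrightarrow> line v \<subseteq> U \<longleftrightarrow> v \<in> U"
  using mem_line[of v] by (auto simp: line_def vec.subspace_scale)

lemma ex_nonzero_perp_perp:
  assumes "3 \<le> CARD('n::finite)" and "w \<noteq> (0 :: 'a::field ^ 'n)" and "w' \<noteq> 0"
  obtains v where "v \<noteq> 0" "dotp w v = 0" "dotp w' v = 0"
proof -
  have dim: "2 \<le> vec.dim (perp w)" using dim_perp[OF assms(2)] assms(1) by simp
  have "\<not> perp w \<subseteq> {0}"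
  proof
    assume "perp w \<subseteq> {0}"
    then have "vec.dim (perp w) \<le> vec.dim {0 :: 'a ^ 'n}" by (rule vec.dim_subset)
    moreover have "vec.dim {0 :: 'a ^ 'n} = 0" by (simp add: vec.dim_insert vec.span_zero)
    ultimately show False using dim by linarith
  qed
  then obtain b1 where b1: "b1 \<in> perp w" "b1 \<noteq> 0" by blast
  have "\<not> perp w \<subseteq> line b1"
  proof
    assume "perp w \<subseteq> line b1"
    then have "vec.dim (perp w) \<le> vec.dim (line b1)" by (rule vec.dim_subset)
    then show False using dim_line[OF b1(2)] dim by simp
  qed
  then obtain b2 where b2: "b2 \<in> perp w" "b2 \<notin> line b1" by blast
  show ?thesis
  proof (cases "dotp w' b1 = 0")
    case True then show ?thesis using b1 that by (auto simp: perp_def)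
  next
    case False
    define v where "v = dotp w' b2 *s b1 - dotp w' b1 *s b2"
    have "dotp w v = 0" using b1 b2 by (simp add: v_def perp_def dotp_diff dotp_scale)
    moreover have "dotp w' v = 0" by (simp add: v_def dotp_diff dotp_scale mult.commute)
    moreover have "v \<noteq> 0"
    proof
      assume "v = 0"
      then have "dotp w' b1 *s b2 = dotp w' b2 *s b1" by (simp add: v_def)
      then have "inverse (dotp w' b1) *s (dotp w' b1 *s b2) = inverse (dotp w' b1) *s (dotp w' b2 *s b1)"
        by simp
      then have "b2 = (inverse (dotp w' b1) * dotp w' b2) *s b1"
        using False by (simp add: vector_smult_assoc)
      then show False using b2 by (simp add: line_def)
    qed
    ultimately show ?thesis using that by blast
  qed
qed

section \<open>Cayley graphs from congruent maps of groups\<close>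

definition image_monoid :: "('g, 'm) monoid_scheme \<Rightarrow> ('g \<Rightarrow> 'v) \<Rightarrow> 'v monoid" where
  "image_monoid H \<pi> =
     (let rep = (\<lambda>u. SOME x. x \<in> carrier H \<and> \<pi> x = u)
      in \<lparr>carrier = \<pi> ` carrier H, mult = (\<lambda>u w. \<pi> (rep u \<otimes>\<^bsub>H\<^esub> rep w)), one = \<pi> \<one>\<^bsub>H\<^esub>\<rparr>)"

locale congruent_map = group H for H :: "('g, 'm) monoid_scheme" (structure) +
  fixes \<pi> :: "'g \<Rightarrow> 'v"
  assumes congruent: "\<lbrakk>x \<in> carrier H; x' \<in> carrier H; y \<in> carrier H; y' \<in> carrier H;
      \<pi> x = \<pi> x'; \<pi> y = \<pi> y'\<rbrakk> \<Longrightarrow> \<pi> (x \<otimes> y) = \<pi> (x' \<otimes> y')"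
begin

abbreviation (input) G where "G \<equiv> image_monoid H \<pi>"

lemma carrier_image_monoid [simp]: "carrier G = \<pi> ` carrier H"
  and one_image_monoid [simp]: "\<one>\<^bsub>G\<^esub> = \<pi> \<one>"
  by (simp_all add: image_monoid_def Let_def)

lemma mult_image_monoid [simp]:
  assumes "x \<in> carrier H" "y \<in> carrier H"
  shows "\<pi> x \<otimes>\<^bsub>G\<^esub> \<pi> y = \<pi> (x \<otimes> y)"
proof -
  define rep where "rep u = (SOME x. x \<in> carrier H \<and> \<pi> x = u)" for u
  have rep: "rep (\<pi> x) \<in> carrier H \<and> \<pi> (rep (\<pi> x)) = \<pi> x" if "x \<in> carrier H" for x
    unfolding rep_def by (rule someI_ex) (use that in blast)
  have "\<pi> x \<otimes>\<^bsub>G\<^esub> \<pi> y = \<pi> (rep (\<pi> x) \<otimes> rep (\<pi> y))"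
    by (simp add: image_monoid_def Let_def rep_def)
  also have "\<dots> = \<pi> (x \<otimes> y)"
    using rep[OF assms(1)] rep[OF assms(2)] assms by (intro congruent) auto
  finally show ?thesis .
qed

lemma group_image_monoid: "group G"
proof (rule groupI)
  fix u w assume "u \<in> carrier G" "w \<in> carrier G"
  then show "u \<otimes>\<^bsub>G\<^esub> w \<in> carrier G" by auto
next
  show "\<one>\<^bsub>G\<^esub> \<in> carrier G" by simp
next
  fix u v w assume "u \<in> carrier G" "v \<in> carrier G" "w \<in> carrier G"
  then show "u \<otimes>\<^bsub>G\<^esub> v \<otimes>\<^bsub>G\<^esub> w = u \<otimes>\<^bsub>G\<^esub> (v \<otimes>\<^bsub>G\<^esub> w)"
    by (auto simp: m_assoc)
next
  fix u assume "u \<in> carrier G"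
  then show "\<one>\<^bsub>G\<^esub> \<otimes>\<^bsub>G\<^esub> u = u" by auto
next
  fix u assume "u \<in> carrier G"
  then obtain x where x: "x \<in> carrier H" "u = \<pi> x" by auto
  then have "\<pi> (inv x) \<otimes>\<^bsub>G\<^esub> u = \<one>\<^bsub>G\<^esub>" and "\<pi> (inv x) \<in> carrier G"
    by simp_all
  then show "\<exists>v\<in>carrier G. v \<otimes>\<^bsub>G\<^esub> u = \<one>\<^bsub>G\<^esub>" by (rule bexI)
qed

lemma inv_image_monoid [simp]: "x \<in> carrier H \<Longrightarrow> inv\<^bsub>G\<^esub> (\<pi> x) = \<pi> (inv x)"
  by (intro group.inv_equality[OF group_image_monoid]) auto

lemma image_generate_subset:
  assumes "S \<subseteq> carrier H"
  shows "\<pi> ` generate H S \<subseteq> generate G (\<pi> ` S)"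
proof -
  have "\<pi> x \<in> generate G (\<pi> ` S)" if "x \<in> generate H S" for x
    using that
  proof (induction x rule: generate.induct)
    case one then show ?case using generate.one[of G] by simp
  next
    case (incl h) then show ?case by (simp add: generate.incl)
  next
    case (inv h)
    then have "inv\<^bsub>G\<^esub> (\<pi> h) \<in> generate G (\<pi> ` S)" by (simp add: generate.inv)
    then show ?case using inv assms by auto
  next
    case (eng h1 h2)
    then have "\<pi> h1 \<otimes>\<^bsub>G\<^esub> \<pi> h2 \<in> generate G (\<pi> ` S)" by (simp add: generate.eng)
    then show ?case
      using eng generate_in_carrier[OF assms] by simp
  qed
  then show ?thesis by blast
qed

theorem is_cayley_graph_image:
  assumes fin: "finite (\<pi> ` carrier H)"
    and S: "S \<subseteq> carrier H" "\<pi> \<one> \<notin> \<pi> ` S" "\<And>s. s \<in> S \<Longrightarrow> \<pi> (inv s) \<in> \<pi> ` S"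
    and gen: "\<And>x. x \<in> carrier H \<Longrightarrow> \<exists>y\<in>generate H S. \<pi> x = \<pi> y"
    and adj: "\<And>x y. x \<in> carrier H \<Longrightarrow> y \<in> carrier H \<Longrightarrow> E (\<pi> x) (\<pi> y) \<longleftrightarrow> \<pi> (inv x \<otimes> y) \<in> \<pi> ` S"
  shows "is_cayley_graph (\<pi> ` carrier H) E"
  unfolding is_cayley_graph_def
proof (intro exI conjI)
  interpret G: group G by (rule group_image_monoid)
  show "group G" ..
  show "finite (carrier G)" using fin by simp
  show "\<pi> ` S \<subseteq> carrier G" using S(1) by auto
  show "\<one>\<^bsub>G\<^esub> \<notin> \<pi> ` S" using S(2) by simp
  show "\<forall>s\<in>\<pi> ` S. inv\<^bsub>G\<^esub> s \<in> \<pi> ` S" using S by auto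
  show "generate G (\<pi> ` S) = carrier G"
  proof
    show "generate G (\<pi> ` S) \<subseteq> carrier G"
      using G.generate_in_carrier \<open>\<pi> ` S \<subseteq> carrier G\<close> by blast
    show "carrier G \<subseteq> generate G (\<pi> ` S)"
    proof
      fix u assume "u \<in> carrier G"
      then obtain x where "x \<in> carrier H" "u = \<pi> x" by auto
      then obtain y where "y \<in> generate H S" "u = \<pi> y" using gen by blast
      then show "u \<in> generate G (\<pi> ` S)" using image_generate_subset[OF S(1)] by blast
    qed
  qed
  show "bij_betw id (carrier G) (\<pi> ` carrier H)" by simp
  show "\<forall>u\<in>carrier G. \<forall>w\<in>carrier G. E (id u) (id w) \<longleftrightarrow> inv\<^bsub>G\<^esub> u \<otimes>\<^bsub>G\<^esub> w \<in> \<pi> ` S"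
  proof (intro ballI)
    fix u w assume "u \<in> carrier G" "w \<in> carrier G"
    then obtain x y where "x \<in> carrier H" "y \<in> carrier H" "u = \<pi> x" "w = \<pi> y" by auto
    then show "E (id u) (id w) \<longleftrightarrow> inv\<^bsub>G\<^esub> u \<otimes>\<^bsub>G\<^esub> w \<in> \<pi> ` S"
      using adj by simp
  qed
qed

end

section \<open>The Singer model of the point-hyperplane incidence graph\<close>

locale singer_model =
  fixes \<phi> :: "'a::{finite,field} ^ 'n::finite \<Rightarrow> 'a alg_closure"
  assumes inj_\<phi>: "inj \<phi>"
    and \<phi>_add: "\<phi> (v + w) = \<phi> v + \<phi> w"
    and \<phi>_scale: "\<phi> (c *s v) = to_ac c * \<phi> v"
    and one_mem: "1 \<in> range \<phi>"
    and mult_mem: "x \<in> range \<phi> \<Longrightarrow> y \<in> range \<phi> \<Longrightarrow> x * y \<in> range \<phi>"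
    and inverse_mem: "x \<in> range \<phi> \<Longrightarrow> inverse x \<in> range \<phi>"
    and three_le_dim: "3 \<le> CARD('n)"
begin

abbreviation K where "K \<equiv> range \<phi>"

definition \<psi> :: "'a alg_closure \<Rightarrow> 'a ^ 'n" where
  "\<psi> = inv_into UNIV \<phi>"

lemma \<psi>_\<phi> [simp]: "\<psi> (\<phi> v) = v"
  by (simp add: \<psi>_def inj_\<phi>)

lemma \<phi>_\<psi> [simp]: "x \<in> K \<Longrightarrow> \<phi> (\<psi> x) = x"
  by (simp add: \<psi>_def f_inv_into_f)

lemma \<phi>_zero [simp]: "\<phi> 0 = 0"
  using \<phi>_scale[of 0 0] by simp

lemma \<phi>_eq_0_iff [simp]: "\<phi> v = 0 \<longleftrightarrow> v = 0"
  using inj_\<phi> \<phi>_zero by (metis injD)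

lemma \<psi>_zero [simp]: "\<psi> 0 = 0"
  using \<psi>_\<phi>[of 0] by simp

lemma zero_mem: "0 \<in> K"
  using \<phi>_zero by (metis rangeI)

lemma add_mem: "x \<in> K \<Longrightarrow> y \<in> K \<Longrightarrow> x + y \<in> K"
  by (auto simp flip: \<phi>_add)

lemma scale_mem: "x \<in> K \<Longrightarrow> to_ac c * x \<in> K"
  by (auto simp flip: \<phi>_scale)

lemma diff_mem: "x \<in> K \<Longrightarrow> y \<in> K \<Longrightarrow> x - y \<in> K"
  using add_mem[of x "to_ac (-1) * y"] scale_mem[of y "-1"] by simp

lemma divide_mem: "x \<in> K \<Longrightarrow> y \<in> K \<Longrightarrow> x / y \<in> K"
  by (simp add: divide_inverse mult_mem inverse_mem)

lemma \<psi>_add: "x \<in> K \<Longrightarrow> y \<in> K \<Longrightarrow> \<psi> (x + y) = \<psi> x + \<psi> y"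
  by (auto simp flip: \<phi>_add)

lemma \<psi>_scale: "x \<in> K \<Longrightarrow> \<psi> (to_ac c * x) = c *s \<psi> x"
  by (auto simp flip: \<phi>_scale)

lemma \<psi>_eq_0_iff: "x \<in> K \<Longrightarrow> \<psi> x = 0 \<longleftrightarrow> x = 0"
  by auto

lemma card_K: "card K = card (UNIV :: ('a ^ 'n) set)"
  by (simp add: card_image inj_\<phi>)

text \<open>Any nonzero \<open>F\<close>-linear form on \<open>K\<close> would do for \<open>coord\<close>.\<close>

definition coord :: "'a alg_closure \<Rightarrow> 'a" where
  "coord x = \<psi> x $ undefined"

lemma coord_add: "x \<in> K \<Longrightarrow> y \<in> K \<Longrightarrow> coord (x + y) = coord x + coord y"
  by (simp add: coord_def \<psi>_add)

lemma coord_scale: "x \<in> K \<Longrightarrow> coord (to_ac c * x) = c * coord x"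
  by (simp add: coord_def \<psi>_scale)

lemma coord_diff: "x \<in> K \<Longrightarrow> y \<in> K \<Longrightarrow> coord (x - y) = coord x - coord y"
  using coord_add[of "x - y" y] diff_mem[of x y] by simp

definition dual_vec :: "'a alg_closure \<Rightarrow> 'a ^ 'n" where
  "dual_vec y = (\<chi> i. coord (y * \<phi> (axis i 1)))"

lemma dotp_dual_vec: "y \<in> K \<Longrightarrow> dotp (dual_vec y) v = coord (y * \<phi> v)"
proof -
  assume y: "y \<in> K"
  have "coord (y * \<phi> v) = dotp (\<chi> i. coord (y * \<phi> (axis i 1))) v"
  proof (rule additive_scale_eq_dotp)
    show "coord (y * \<phi> (v + u)) = coord (y * \<phi> v) + coord (y * \<phi> u)" for v u
      using y by (simp add: \<phi>_add distrib_left coord_add mult_mem)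
    show "coord (y * \<phi> (c *s v)) = c * coord (y * \<phi> v)" for c v
      using y coord_scale[of "y * \<phi> v" c] by (simp add: \<phi>_scale mult_mem mult.left_commute)
  qed
  then show ?thesis by (simp add: dual_vec_def)
qed

lemma dual_vec_scale: "y \<in> K \<Longrightarrow> dual_vec (to_ac c * y) = c *s dual_vec y"
  using coord_scale by (simp add: dual_vec_def vec_eq_iff mult.assoc mult_mem)

lemma coord_mult_eq_0_imp_eq_0:
  assumes y: "y \<in> K" and zero: "\<And>v. coord (y * \<phi> v) = 0"
  shows "y = 0"
proof (rule ccontr)
  assume "y \<noteq> 0"
  \<comment> \<open>\<open>coord\<close> is nonzero, and multiplication by \<open>y\<close> is onto \<open>K\<close>\<close>
  define v where "v = \<psi> (\<phi> (axis undefined 1) / y)"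
  have "y * \<phi> v = \<phi> (axis undefined 1)"
    using \<open>y \<noteq> 0\<close> y by (simp add: v_def divide_mem)
  then have "coord (y * \<phi> v) = 1" by (simp add: coord_def)
  then show False using zero by simp
qed

lemma dual_vec_eq_0_iff:
  assumes "y \<in> K"
  shows "dual_vec y = 0 \<longleftrightarrow> y = 0"
proof
  assume "dual_vec y = 0"
  then show "y = 0"
    using assms dotp_dual_vec[OF assms] by (intro coord_mult_eq_0_imp_eq_0) simp_all
qed (simp add: dual_vec_def coord_def vec_eq_iff)

lemma inj_on_dual_vec: "inj_on dual_vec K"
proof (rule inj_onI)
  fix y y' assume y: "y \<in> K" "y' \<in> K" and eq: "dual_vec y = dual_vec y'"
  have "coord ((y - y') * \<phi> v) = 0" for v
    using y eq dotp_dual_vec[of y v] dotp_dual_vec[of y' v]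
    by (simp add: left_diff_distrib coord_diff mult_mem)
  then have "y - y' = 0" using y by (intro coord_mult_eq_0_imp_eq_0) (simp_all add: diff_mem)
  then show "y = y'" by simp
qed

lemma dual_vec_image: "dual_vec ` K = UNIV"
proof -
  have "card (dual_vec ` K) = card (UNIV :: ('a ^ 'n) set)"
    by (simp add: card_image inj_on_dual_vec card_K)
  then show ?thesis by (simp add: card_subset_eq)
qed

text \<open>The generalised dihedral group of \<open>K\<^sup>\<times>\<close>: \<open>(a, False)\<close> are the rotations, \<open>(a, True)\<close> the
  reflections.\<close>

definition singer_group :: "('a alg_closure \<times> bool) monoid" where
  "singer_group =
     \<lparr>carrier = (K - {0}) \<times> UNIV,
      mult = (\<lambda>(a, s) (b, t). (if s then a / b else a * b, s \<noteq> t)),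
      one = (1, False)\<rparr>"

lemma carrier_singer_group [simp]: "x \<in> carrier singer_group \<longleftrightarrow> fst x \<in> K \<and> fst x \<noteq> 0"
  by (cases x) (simp add: singer_group_def)

lemma one_singer_group [simp]: "\<one>\<^bsub>singer_group\<^esub> = (1, False)"
  by (simp add: singer_group_def)

lemma mult_singer_group [simp]:
  "(a, s) \<otimes>\<^bsub>singer_group\<^esub> (b, t) = (if s then a / b else a * b, s \<noteq> t)"
  by (simp add: singer_group_def)

lemma group_singer_group: "group singer_group"
proof (rule groupI)
  fix x y assume "x \<in> carrier singer_group" "y \<in> carrier singer_group"
  then show "x \<otimes>\<^bsub>singer_group\<^esub> y \<in> carrier singer_group"
    by (cases x, cases y) (simp add: mult_mem divide_mem)
next
  fix x y z assume "x \<in> carrier singer_group" "y \<in> carrier singer_group" "z \<in> carrier singer_group"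
  then show "x \<otimes>\<^bsub>singer_group\<^esub> y \<otimes>\<^bsub>singer_group\<^esub> z =
      x \<otimes>\<^bsub>singer_group\<^esub> (y \<otimes>\<^bsub>singer_group\<^esub> z)"
    by (cases x, cases y, cases z) (simp add: field_simps)
next
  fix x assume x: "x \<in> carrier singer_group"
  then show "\<one>\<^bsub>singer_group\<^esub> \<otimes>\<^bsub>singer_group\<^esub> x = x" by (cases x) simp
  obtain a s where "x = (a, s)" by fastforce
  then have "(if s then a else inverse a, s) \<otimes>\<^bsub>singer_group\<^esub> x = \<one>\<^bsub>singer_group\<^esub>"
    and "(if s then a else inverse a, s) \<in> carrier singer_group"
    using x by (simp_all add: inverse_mem)
  then show "\<exists>y\<in>carrier singer_group. y \<otimes>\<^bsub>singer_group\<^esub> x = \<one>\<^bsub>singer_group\<^esub>"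
    by (rule bexI)
qed (simp_all add: one_mem)

lemma inv_singer_group [simp]:
  assumes "a \<in> K" "a \<noteq> 0"
  shows "inv\<^bsub>singer_group\<^esub> (a, s) = (if s then a else inverse a, s)"
  using assms by (intro group.inv_equality[OF group_singer_group]) (simp_all add: inverse_mem)

text \<open>The point of \<open>(a, False)\<close> is spanned by \<open>\<psi> (a\<inverse>)\<close> so that it lies on the hyperplane of
  \<open>(b, True)\<close> iff \<open>coord (b / a) = 0\<close>, i.e. iff \<open>(a, False)\<inverse> (b, True)\<close> is in the connection set.\<close>

definition vertex :: "'a alg_closure \<times> bool \<Rightarrow> ('a ^ 'n) set" where
  "vertex = (\<lambda>(a, s). if s then perp (dual_vec a) else line (\<psi> (inverse a)))"

lemma vertex_point [simp]: "vertex (a, False) = line (\<psi> (inverse a))"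
  and vertex_hyperplane [simp]: "vertex (a, True) = perp (dual_vec a)"
  by (simp_all add: vertex_def)

lemma subspace_vertex: "vec.subspace (vertex x)"
  by (cases x) (auto simp: vertex_def subspace_line subspace_perp)

lemma dim_vertex:
  assumes "a \<in> K" "a \<noteq> 0"
  shows "vec.dim (vertex (a, s)) = (if s then CARD('n) - 1 else 1)"
  using assms by (simp add: dim_perp dim_line dual_vec_eq_0_iff \<psi>_eq_0_iff inverse_mem)

lemma vertex_eq_iff:
  assumes a: "a \<in> K" "a \<noteq> 0" and b: "b \<in> K" "b \<noteq> 0"
  shows "vertex (a, s) = vertex (b, t) \<longleftrightarrow> s = t \<and> (\<exists>c. c \<noteq> 0 \<and> b = to_ac c * a)"
proof
  assume eq: "vertex (a, s) = vertex (b, t)"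
  have "CARD('n) - 1 \<noteq> 1" using three_le_dim by simp
  moreover have "vec.dim (vertex (a, s)) = vec.dim (vertex (b, t))" using eq by simp
  ultimately have "s = t"
    using dim_vertex[OF a, of s] dim_vertex[OF b, of t] by (cases s; cases t) simp_all
  moreover have "\<exists>c. c \<noteq> 0 \<and> b = to_ac c * a"
  proof (cases s)
    case True
    have "dual_vec a \<noteq> 0" using a by (simp add: dual_vec_eq_0_iff)
    moreover have "perp (dual_vec a) \<subseteq> perp (dual_vec b)" using eq True \<open>s = t\<close> by simp
    ultimately obtain c where "dual_vec b = c *s dual_vec a" by (rule perp_subset_imp_scale)
    then have "dual_vec b = dual_vec (to_ac c * a)" using a by (simp add: dual_vec_scale)
    then have "b = to_ac c * a" by (rule inj_onD[OF inj_on_dual_vec]) (use b a scale_mem in auto)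
    moreover have "c \<noteq> 0" using b(2) calculation by (cases "c = 0") simp_all
    ultimately show ?thesis by blast
  next
    case False
    have "\<psi> (inverse b) \<noteq> 0" using b by (simp add: \<psi>_eq_0_iff inverse_mem)
    moreover have "line (\<psi> (inverse a)) = line (\<psi> (inverse b))" using eq False \<open>s = t\<close> by simp
    ultimately obtain c where c: "c \<noteq> 0" "\<psi> (inverse b) = c *s \<psi> (inverse a)"
      by (rule line_eq_imp_scale)
    have "inverse b = \<phi> (\<psi> (inverse b))" using b by (simp add: inverse_mem)
    also have "\<dots> = to_ac c * inverse a" using a by (simp add: c(2) \<phi>_scale inverse_mem)
    finally have "inverse (inverse b) = inverse (to_ac c * inverse a)" by (rule arg_cong)
    then have "b = to_ac (inverse c) * a" by (simp add: inverse_mult_distrib)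
    moreover have "inverse c \<noteq> 0" using c(1) by simp
    ultimately show ?thesis by blast
  qed
  ultimately show "s = t \<and> (\<exists>c. c \<noteq> 0 \<and> b = to_ac c * a)" ..
next
  assume "s = t \<and> (\<exists>c. c \<noteq> 0 \<and> b = to_ac c * a)"
  then obtain c where c: "s = t" "c \<noteq> 0" "b = to_ac c * a" by blast
  then have "inverse b = to_ac (inverse c) * inverse a" by (simp add: inverse_mult_distrib)
  then have "\<psi> (inverse b) = \<psi> (to_ac (inverse c) * inverse a)" by (rule arg_cong)
  also have "\<dots> = inverse c *s \<psi> (inverse a)" by (rule \<psi>_scale[OF inverse_mem[OF a(1)]])
  finally have "\<psi> (inverse b) = inverse c *s \<psi> (inverse a)" .
  then show "vertex (a, s) = vertex (b, t)"
    using a c by (cases s) (simp_all add: dual_vec_scale perp_scale line_scale)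
qed

lemma vertex_mult_congruent:
  assumes x: "(a, s) \<in> carrier singer_group" "(a', s') \<in> carrier singer_group"
    and y: "(b, t) \<in> carrier singer_group" "(b', t') \<in> carrier singer_group"
    and eq: "vertex (a, s) = vertex (a', s')" "vertex (b, t) = vertex (b', t')"
  shows "vertex ((a, s) \<otimes>\<^bsub>singer_group\<^esub> (b, t)) = vertex ((a', s') \<otimes>\<^bsub>singer_group\<^esub> (b', t'))"
proof -
  obtain c where c: "s = s'" "c \<noteq> 0" "a' = to_ac c * a"
    using eq(1) x vertex_eq_iff by auto
  obtain d where d: "t = t'" "d \<noteq> 0" "b' = to_ac d * b"
    using eq(2) y vertex_eq_iff by auto
  define k where "k = (if s then c / d else c * d)"
  have "k \<noteq> 0" using c d by (simp add: k_def)
  moreover have "(if s' then a' / b' else a' * b') = to_ac k * (if s then a / b else a * b)"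
    using c d y by (simp add: k_def field_simps)
  moreover have "(s \<noteq> t) = (s' \<noteq> t')" using c d by simp
  moreover have "(if s then a / b else a * b) \<in> K" "(if s then a / b else a * b) \<noteq> 0"
    "(if s' then a' / b' else a' * b') \<in> K" "(if s' then a' / b' else a' * b') \<noteq> 0"
    using x y by (simp_all add: mult_mem divide_mem)
  ultimately show ?thesis
    unfolding mult_singer_group by (subst vertex_eq_iff) blast+
qed

lemma congruent_map_vertex: "congruent_map singer_group vertex"
proof (rule congruent_map.intro[OF group_singer_group], unfold_locales)
  fix x x' y y'
  assume "x \<in> carrier singer_group" "x' \<in> carrier singer_group"
    "y \<in> carrier singer_group" "y' \<in> carrier singer_group"
    "vertex x = vertex x'" "vertex y = vertex y'"
  then show "vertex (x \<otimes>\<^bsub>singer_group\<^esub> y) = vertex (x' \<otimes>\<^bsub>singer_group\<^esub> y')"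
    using vertex_mult_congruent[of "fst x" "snd x" "fst x'" "snd x'" "fst y" "snd y" "fst y'" "snd y'"]
    by simp
qed

lemma vertex_image: "vertex ` carrier singer_group = (incidence_vertices :: ('a ^ 'n) set set)"
proof (intro equalityI subsetI)
  fix U assume "U \<in> vertex ` carrier singer_group"
  then obtain a s where "a \<in> K" "a \<noteq> 0" "U = vertex (a, s)" by force
  then show "U \<in> incidence_vertices"
    using dim_vertex[of a s] subspace_vertex[of "(a, s)"] by (simp add: incidence_vertices_def)
next
  fix U :: "('a ^ 'n) set" assume "U \<in> incidence_vertices"
  then have U: "vec.subspace U" "vec.dim U = 1 \<or> vec.dim U = CARD('n) - 1"
    by (auto simp: incidence_vertices_def)
  show "U \<in> vertex ` carrier singer_group"
  proof (cases "vec.dim U = 1")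
    case True
    then obtain v where v: "v \<noteq> 0" "U = line v" using dim_1_imp_line U(1) by blast
    then have "U = vertex (inverse (\<phi> v), False)" by simp
    moreover have "(inverse (\<phi> v), False) \<in> carrier singer_group"
      using v by (simp add: inverse_mem)
    ultimately show ?thesis by (rule image_eqI)
  next
    case False
    then obtain w where w: "w \<noteq> 0" "U = perp w" using dim_hyperplane_imp_perp U by auto
    obtain y where y: "y \<in> K" "w = dual_vec y" using dual_vec_image by (metis UNIV_I imageE)
    then have "U = vertex (y, True)" using w by simp
    moreover have "(y, True) \<in> carrier singer_group" using y w by (auto simp: dual_vec_eq_0_iff)
    ultimately show ?thesis by (rule image_eqI)
  qed
qed

definition singer_connection :: "('a alg_closure \<times> bool) set" where
  "singer_connection = {(a, True) | a. a \<in> K \<and> a \<noteq> 0 \<and> coord a = 0}"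

lemma singer_connection_subset: "singer_connection \<subseteq> carrier singer_group"
  by (auto simp: singer_connection_def)

lemma vertex_in_connection_iff:
  assumes "a \<in> K" "a \<noteq> 0"
  shows "vertex (a, s) \<in> vertex ` singer_connection \<longleftrightarrow> s \<and> coord a = 0"
proof
  assume "vertex (a, s) \<in> vertex ` singer_connection"
  then obtain p where "p \<in> singer_connection" "vertex (a, s) = vertex p" by blast
  then obtain b where b: "b \<in> K" "b \<noteq> 0" "coord b = 0" "vertex (a, s) = vertex (b, True)"
    unfolding singer_connection_def by blast
  then obtain c where "s" "a = to_ac c * b"
    using vertex_eq_iff[OF b(1,2) assms, of True s] by auto
  then show "s \<and> coord a = 0" using b by (simp add: coord_scale)
next
  assume "s \<and> coord a = 0"
  then have "(a, s) \<in> singer_connection" using assms by (simp add: singer_connection_def)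
  then show "vertex (a, s) \<in> vertex ` singer_connection" by (rule imageI)
qed

lemma ex_coord_eq_0_pair:
  assumes "z \<in> K" "z \<noteq> 0"
  obtains d where "d \<in> K" "d \<noteq> 0" "coord d = 0" "coord (z * d) = 0"
proof -
  have "dual_vec 1 \<noteq> 0" "dual_vec z \<noteq> 0" using assms one_mem by (simp_all add: dual_vec_eq_0_iff)
  then obtain v where "v \<noteq> 0" "dotp (dual_vec 1) v = 0" "dotp (dual_vec z) v = 0"
    by (rule ex_nonzero_perp_perp[OF three_le_dim])
  then show ?thesis using that[of "\<phi> v"] assms one_mem by (simp add: dotp_dual_vec)
qed

lemma generate_singer_connection: "generate singer_group singer_connection = carrier singer_group"
proof
  show "generate singer_group singer_connection \<subseteq> carrier singer_group"
    using group.generate_in_carrier[OF group_singer_group singer_connection_subset] by blast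
next
  have gen: "(a, True) \<in> generate singer_group singer_connection" if "a \<in> K" "a \<noteq> 0" "coord a = 0" for a
    using that by (intro generate.incl) (simp add: singer_connection_def)
  \<comment> \<open>a rotation is a product of two reflections from the connection set\<close>
  have rotation: "(z, False) \<in> generate singer_group singer_connection" if z: "z \<in> K" "z \<noteq> 0" for z
  proof -
    obtain d where d: "d \<in> K" "d \<noteq> 0" "coord d = 0" "coord (z * d) = 0"
      using ex_coord_eq_0_pair[OF z] .
    have "(z * d, True) \<otimes>\<^bsub>singer_group\<^esub> (d, True) \<in> generate singer_group singer_connection"
      using d z by (intro generate.eng gen) (simp_all add: mult_mem)
    then show ?thesis using d by simp
  qed
  show "carrier singer_group \<subseteq> generate singer_group singer_connection"
  proof (clarify)
    fix z s assume "(z, s) \<in> carrier singer_group"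
    then have z: "z \<in> K" "z \<noteq> 0" by simp_all
    show "(z, s) \<in> generate singer_group singer_connection"
    proof (cases s)
      case True
      obtain d where d: "d \<in> K" "d \<noteq> 0" "coord d = 0"
        using ex_coord_eq_0_pair[OF one_mem] by auto
      have "(z / d, False) \<otimes>\<^bsub>singer_group\<^esub> (d, True) \<in> generate singer_group singer_connection"
        using d z by (intro generate.eng gen rotation) (simp_all add: divide_mem)
      then show ?thesis using d True by simp
    qed (use rotation z in simp)
  qed
qed

lemma point_subset_hyperplane_iff:
  assumes "a \<in> K" "a \<noteq> 0" "b \<in> K"
  shows "vertex (a, False) \<subseteq> vertex (b, True) \<longleftrightarrow> coord (b / a) = 0"
proof -
  have "vertex (a, False) \<subseteq> vertex (b, True) \<longleftrightarrow> \<psi> (inverse a) \<in> perp (dual_vec b)"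
    by (simp add: line_subset_iff subspace_perp)
  also have "\<dots> \<longleftrightarrow> coord (b * inverse a) = 0"
    using assms by (simp add: perp_def dotp_dual_vec inverse_mem)
  finally show ?thesis by (simp add: divide_inverse)
qed

lemma incidence_adj_vertex_iff:
  assumes x: "x \<in> carrier singer_group" and y: "y \<in> carrier singer_group"
  shows "incidence_adj (vertex x) (vertex y) \<longleftrightarrow>
    vertex (inv\<^bsub>singer_group\<^esub> x \<otimes>\<^bsub>singer_group\<^esub> y) \<in> vertex ` singer_connection"
proof -
  obtain a s b t where xy: "x = (a, s)" "y = (b, t)" by fastforce
  have a: "a \<in> K" "a \<noteq> 0" and b: "b \<in> K" "b \<noteq> 0" using x y xy by simp_all
  have "CARD('n) - 1 \<noteq> 1" using three_le_dim by simp
  then have "incidence_adj (vertex (a, s)) (vertex (b, t)) \<longleftrightarrow>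
      (\<not> s \<and> t \<and> vertex (a, s) \<subseteq> vertex (b, t)) \<or> (s \<and> \<not> t \<and> vertex (b, t) \<subseteq> vertex (a, s))"
    using dim_vertex[OF a, of s] dim_vertex[OF b, of t]
    by (cases s; cases t) (auto simp: incidence_adj_def subspace_perp subspace_line)
  also have "\<dots> \<longleftrightarrow> s \<noteq> t \<and> coord (if s then a / b else inverse a * b) = 0"
    using a b by (cases s; cases t)
      (simp_all add: point_subset_hyperplane_iff divide_inverse mult.commute
        del: vertex_point vertex_hyperplane)
  also have "\<dots> \<longleftrightarrow> vertex (if s then a / b else inverse a * b, s \<noteq> t) \<in> vertex ` singer_connection"
    using a b by (intro vertex_in_connection_iff[symmetric]) (simp_all add: divide_mem mult_mem inverse_mem)
  finally show ?thesis using xy a by (simp del: vertex_point vertex_hyperplane)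
qed

theorem is_cayley_graph_incidence:
  "is_cayley_graph (incidence_vertices :: ('a ^ 'n) set set) incidence_adj"
proof -
  interpret congruent_map singer_group vertex by (rule congruent_map_vertex)
  have "is_cayley_graph (vertex ` carrier singer_group) incidence_adj"
  proof (rule is_cayley_graph_image)
    show "finite (vertex ` carrier singer_group)" by simp
    show "singer_connection \<subseteq> carrier singer_group" by (rule singer_connection_subset)
    show "vertex \<one>\<^bsub>singer_group\<^esub> \<notin> vertex ` singer_connection"
      using vertex_in_connection_iff[OF one_mem, of False] by simp
    show "vertex (inv\<^bsub>singer_group\<^esub> s) \<in> vertex ` singer_connection" if "s \<in> singer_connection" for s
      using that by (auto simp: singer_connection_def)
    show "\<exists>y\<in>generate singer_group singer_connection. vertex x = vertex y"
      if "x \<in> carrier singer_group" for x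
      using that generate_singer_connection by blast
  qed (rule incidence_adj_vertex_iff)
  then show ?thesis by (simp add: vertex_image)
qed

end

theorem mainTheorem6:
  assumes "CARD('n::finite) \<ge> 3"
  shows "is_cayley_graph (incidence_vertices :: ('a::{finite,field} ^ 'n) set set) incidence_adj"
proof -
  obtain \<phi> :: "'a ^ 'n \<Rightarrow> 'a alg_closure"
    where \<phi>: "bij_betw \<phi> UNIV (galois_field (CARD('a) ^ CARD('n)))"
      "\<And>v w. \<phi> (v + w) = \<phi> v + \<phi> w" "\<And>c v. \<phi> (c *s v) = to_ac c * \<phi> v"
    using ex_linear_bij_galois_field by blast
  have n: "0 < CARD('n)" by simp
  have K: "range \<phi> = galois_field (CARD('a) ^ CARD('n))" using \<phi>(1) by (simp add: bij_betw_def)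
  interpret singer_model \<phi>
    using \<phi> assms galois_field_closed[where 'a = 'a, OF refl n]
    by unfold_locales (simp_all add: K bij_betw_def)
  show ?thesis by (rule is_cayley_graph_incidence)
qed

end
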